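(* If $n\ge3$, then $a_n(y;-1,1)=0$ and $a_n(y;1,-1)=2^{n-2}y^{n-1}(y-1)$.
   Context: An inversion sequence of length $n$ is a sequence $\rho=\rho_1\cdots\rho_n$ of integers with $1\le \rho_i\le i$ for all $i$; $I_{n,i}$ is the set of those of length $n$ with last letter $i$. Let $\mathrm{area}(\rho)=\rho_1+\cdots+\rho_n$ and $\mathrm{sper}(\rho)=n+\rho_1+\sum_{i=1}^{n-1}\max(\rho_{i+1}-\rho_i,0)$ (the area and semi-perimeter of the bargraph whose $i$-th column has $\rho_i$ cells). Define $a_n(y;p,q)=\sum_{i=1}^n y^i\sum_{\rho\in I_{n,i}}p^{\mathrm{area}(\rho)}q^{\mathrm{sper}(\rho)}$. *)

theory Defs
  imports Main
begin

(* Inversion sequences of length n, as lists rho with rho!(i-1) = rho_i (1-based letters). *)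
definition inv_seqs :: "nat \<Rightarrow> nat list set" where
  "inv_seqs n = {rho. length rho = n \<and> (\<forall>i<n. 1 \<le> rho ! i \<and> rho ! i \<le> i + 1)}"

definition inv_seqs_last :: "nat \<Rightarrow> nat \<Rightarrow> nat list set" where
  "inv_seqs_last n i = {rho \<in> inv_seqs n. rho ! (n - 1) = i}"

definition area :: "nat list \<Rightarrow> nat" where
  "area rho = sum_list rho"

(* sper(rho) = n + rho_1 + sum_{i=1}^{n-1} max(rho_{i+1} - rho_i, 0); nat subtraction truncates,
   which is exactly max(.,0). *)
definition sper :: "nat list \<Rightarrow> nat" where
  "sper rho = length rho + rho ! 0 + (\<Sum>i<length rho - 1. rho ! (i + 1) - rho ! i)"

definition a_gf :: "nat \<Rightarrow> 'a::comm_ring_1 \<Rightarrow> 'a \<Rightarrow> 'a \<Rightarrow> 'a" where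
  "a_gf n y p q = (\<Sum>i=1..n. y ^ i * (\<Sum>rho\<in>inv_seqs_last n i. p ^ area rho * q ^ sper rho))"

end

theory Submission
  imports Defs
begin

text \<open>
  Deleting the last letter identifies I(k+1, b) with I(k) for 1 \<le> b \<le> k + 1; appending b to a
  sequence with last letter a adds b to the area and 1 + max(b - a, 0) to the semi-perimeter.
  Hence the coefficient c(k, b) of y^b in a_k satisfies
  c(k+1, b) = p^b q \<Sum>_a c(k, a) q^max(b - a, 0).
  At (p, q) = (-1, 1) this reads c(k+1, b) = (-1)^b \<Sum>_a c(k, a), so each step multiplies the
  row sum by \<Sum>_{b \<le> k+1} (-1)^b, which is 0 for k = 1; hence all rows vanish from k = 3 on.
  At (p, q) = (1, -1) the row k = j + 2 is -2^j at b = j + 1, 2^j at b = j + 2 and 0 elsewhere,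
  and the recurrence reproduces this shape with 2^j doubled.
\<close>

lemma snoc_in_inv_seqs_Suc_iff:
  "xs @ [b] \<in> inv_seqs (Suc k) \<longleftrightarrow> xs \<in> inv_seqs k \<and> b \<in> {1..Suc k}"
proof
  assume snoc: "xs @ [b] \<in> inv_seqs (Suc k)"
  then have len: "length xs = k" by (simp add: inv_seqs_def)
  have bounds: "1 \<le> (xs @ [b]) ! i \<and> (xs @ [b]) ! i \<le> i + 1" if "i < Suc k" for i
    using snoc that by (simp add: inv_seqs_def)
  have "1 \<le> xs ! i \<and> xs ! i \<le> i + 1" if "i < k" for i
    using bounds[of i] that len by (simp add: nth_append)
  then show "xs \<in> inv_seqs k \<and> b \<in> {1..Suc k}"
    using len bounds[of k] by (simp add: inv_seqs_def nth_append)
next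
  assume "xs \<in> inv_seqs k \<and> b \<in> {1..Suc k}"
  then show "xs @ [b] \<in> inv_seqs (Suc k)"
    by (auto simp: inv_seqs_def nth_append less_Suc_eq)
qed

lemma finite_inv_seqs: "finite (inv_seqs n)"
proof (rule finite_subset)
  show "inv_seqs n \<subseteq> {xs. set xs \<subseteq> {..n} \<and> length xs = n}"
    unfolding inv_seqs_def by (force simp: in_set_conv_nth)
  show "finite {xs. set xs \<subseteq> {..n} \<and> length xs = n}"
    by (rule finite_lists_length_eq) simp
qed

lemma inv_seqs_nonempty: "rho \<in> inv_seqs k \<Longrightarrow> k \<ge> 1 \<Longrightarrow> rho \<noteq> []"
  by (auto simp: inv_seqs_def)

lemma last_inv_seqs_conv_nth: "rho \<in> inv_seqs k \<Longrightarrow> k \<ge> 1 \<Longrightarrow> last rho = rho ! (k - 1)"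
  using inv_seqs_nonempty by (auto simp: inv_seqs_def last_conv_nth)

lemma inv_seqs_last_conv_last:
  assumes "k \<ge> 1"
  shows "inv_seqs_last k a = {rho \<in> inv_seqs k. last rho = a}"
  using assms last_inv_seqs_conv_nth by (auto simp: inv_seqs_last_def)

lemma last_in_inv_seqs:
  assumes "rho \<in> inv_seqs k" "k \<ge> 1"
  shows "last rho \<in> {1..k}"
proof -
  have "1 \<le> rho ! (k - 1) \<and> rho ! (k - 1) \<le> k"
    using assms by (auto simp: inv_seqs_def dest!: spec[of _ "k - 1"])
  then show ?thesis
    using assms by (simp add: last_inv_seqs_conv_nth)
qed

lemma inv_seqs_last_Suc:
  "inv_seqs_last (Suc k) b = (if b \<in> {1..Suc k} then (\<lambda>xs. xs @ [b]) ` inv_seqs k else {})"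
proof -
  have "rho = butlast rho @ [last rho]" if "rho \<in> inv_seqs (Suc k)" for rho
    using that inv_seqs_nonempty by simp
  then have "inv_seqs_last (Suc k) b = {xs @ [b] | xs. xs @ [b] \<in> inv_seqs (Suc k)}"
    by (force simp: inv_seqs_last_conv_last)
  then show ?thesis
    by (auto simp: snoc_in_inv_seqs_Suc_iff)
qed

lemma sum_inv_seqs_by_last:
  assumes "k \<ge> 1"
  shows "(\<Sum>rho\<in>inv_seqs k. g rho) = (\<Sum>a=1..k. \<Sum>rho\<in>inv_seqs_last k a. g rho)"
  unfolding inv_seqs_last_conv_last[OF assms]
  by (rule sum.group[symmetric]) (use assms last_in_inv_seqs finite_inv_seqs in auto)

lemma area_snoc: "area (xs @ [b]) = area xs + b"
  by (simp add: area_def)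

lemma sper_snoc:
  assumes "xs \<noteq> []"
  shows "sper (xs @ [b]) = sper xs + 1 + (b - last xs)"
proof -
  obtain m where m: "length xs = Suc m"
    using assms by (cases xs) auto
  have "(\<Sum>i<Suc m. (xs @ [b]) ! (i + 1) - (xs @ [b]) ! i)
      = (\<Sum>i<m. xs ! (i + 1) - xs ! i) + (b - last xs)"
    using m assms by (simp add: nth_append last_conv_nth)
  then show ?thesis
    unfolding sper_def using m by (simp add: nth_append)
qed

definition a_coeff :: "nat \<Rightarrow> nat \<Rightarrow> 'a::comm_ring_1 \<Rightarrow> 'a \<Rightarrow> 'a" where
  "a_coeff n i p q = (\<Sum>rho\<in>inv_seqs_last n i. p ^ area rho * q ^ sper rho)"

lemma a_gf_conv_a_coeff: "a_gf n y p q = (\<Sum>i=1..n. y ^ i * a_coeff n i p q)"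
  by (simp add: a_gf_def a_coeff_def)

lemma a_coeff_1: "a_coeff 1 b p q = (if b = 1 then p * q ^ 2 else 0)"
proof -
  have "inv_seqs 0 = {[]}"
    by (auto simp: inv_seqs_def)
  then show ?thesis
    using inv_seqs_last_Suc[of 0 b] by (simp add: a_coeff_def area_def sper_def power2_eq_square)
qed

lemma a_coeff_Suc:
  assumes "k \<ge> 1"
  shows "a_coeff (Suc k) b p q =
    (if b \<in> {1..Suc k} then p ^ b * q * (\<Sum>a=1..k. a_coeff k a p q * q ^ (b - a)) else 0)"
proof (cases "b \<in> {1..Suc k}")
  case False
  then show ?thesis
    by (simp add: a_coeff_def inv_seqs_last_Suc del: atLeastAtMost_iff)
next
  case True
  let ?w = "\<lambda>xs. p ^ area xs * q ^ sper xs"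
  have "a_coeff (Suc k) b p q = (\<Sum>xs\<in>inv_seqs k. ?w (xs @ [b]))"
    using True by (simp add: a_coeff_def inv_seqs_last_Suc sum.reindex inj_on_def)
  also have "\<dots> = (\<Sum>xs\<in>inv_seqs k. p ^ b * q * (?w xs * q ^ (b - last xs)))"
    using assms inv_seqs_nonempty
    by (intro sum.cong refl) (simp add: area_snoc sper_snoc power_add mult_ac)
  also have "\<dots> = p ^ b * q * (\<Sum>a=1..k. \<Sum>xs\<in>inv_seqs_last k a. ?w xs * q ^ (b - last xs))"
    using assms by (simp add: sum_distrib_left sum_inv_seqs_by_last)
  also have "\<dots> = p ^ b * q * (\<Sum>a=1..k. a_coeff k a p q * q ^ (b - a))"
    using assms by (simp add: a_coeff_def sum_distrib_right inv_seqs_last_conv_last)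
  finally show ?thesis
    using True by simp
qed

lemma sum_a_coeff_Suc_at_q1:
  assumes "k \<ge> 1"
  shows "(\<Sum>b=1..Suc k. a_coeff (Suc k) b p 1) = (\<Sum>b=1..Suc k. p ^ b) * (\<Sum>a=1..k. a_coeff k a p 1)"
proof -
  have "(\<Sum>b=1..Suc k. a_coeff (Suc k) b p 1) = (\<Sum>b=1..Suc k. p ^ b * (\<Sum>a=1..k. a_coeff k a p 1))"
    using assms by (intro sum.cong refl) (simp add: a_coeff_Suc)
  then show ?thesis
    by (simp only: sum_distrib_right)
qed

lemma sum_a_coeff_at_m1_1_eq_0:
  assumes "k \<ge> 2"
  shows "(\<Sum>a=1..k. a_coeff k a (-1 :: 'a::comm_ring_1) 1) = 0"
  using assms
proof (induction k rule: dec_induct)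
  case base
  have "(\<Sum>b=1..2. (-1 :: 'a) ^ b) = 0"
    by (simp add: numeral_2_eq_2)
  then show ?case
    using sum_a_coeff_Suc_at_q1[of 1 "-1 :: 'a"] by (simp add: numeral_2_eq_2)
next
  case (step k)
  then show ?case
    using sum_a_coeff_Suc_at_q1[of k "-1 :: 'a"] by simp
qed

lemma a_coeff_at_m1_1_eq_0:
  assumes "n \<ge> 3"
  shows "a_coeff n b (-1 :: 'a::comm_ring_1) 1 = 0"
proof -
  obtain k where "n = Suc k" "k \<ge> 2"
    using assms by (cases n) auto
  then show ?thesis
    using a_coeff_Suc[of k b "-1 :: 'a" 1] sum_a_coeff_at_m1_1_eq_0[of k, where 'a = 'a] by simp
qed

lemma a_coeff_at_1_m1:
  "a_coeff (j + 2) b 1 (-1 :: 'a::comm_ring_1) =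
    (if b = j + 2 then 2 ^ j else 0) - (if b = j + 1 then 2 ^ j else 0)"
proof (induction j arbitrary: b)
  case 0
  have "(\<Sum>a=1..1. a_coeff 1 a 1 (-1 :: 'a) * (-1) ^ (b - a)) = (-1) ^ (b - 1)"
    by (simp add: a_coeff_1[unfolded One_nat_def])
  then have "a_coeff (Suc 1) b 1 (-1 :: 'a) = (if b \<in> {1..Suc 1} then - ((-1) ^ (b - 1)) else 0)"
    using a_coeff_Suc[of 1 b 1 "-1 :: 'a"] by simp
  then show ?case
    by (cases "b = 1"; cases "b = 2") (auto simp: numeral_2_eq_2)
next
  case (Suc j)
  have "(\<Sum>a=1..j+2. a_coeff (j + 2) a 1 (-1 :: 'a) * (-1) ^ (b - a))
      = 2 ^ j * (-1) ^ (b - (j + 2)) - 2 ^ j * (-1) ^ (b - (j + 1))"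
    unfolding Suc.IH by (simp add: left_diff_distrib sum_subtractf if_distrib sum.delta')
  then have "a_coeff (Suc j + 2) b 1 (-1 :: 'a) = (if b \<in> {1..j+3} then
      2 ^ j * (-1) ^ (b - (j + 1)) - 2 ^ j * (-1) ^ (b - (j + 2)) else 0)"
    using a_coeff_Suc[of "j + 2" b 1 "-1 :: 'a"] by simp
  then show ?case
    by (cases "b \<le> j + 1"; cases "b = j + 2"; cases "b = j + 3") auto
qed

theorem proposition2p5:
  fixes n :: nat and y :: "'a::comm_ring_1"
  assumes "n \<ge> 3"
  shows "a_gf n y (-1) 1 = 0 \<and> a_gf n y 1 (-1) = 2 ^ (n - 2) * y ^ (n - 1) * (y - 1)"
proof
  show "a_gf n y (-1) 1 = 0"
    using assms by (simp add: a_gf_conv_a_coeff a_coeff_at_m1_1_eq_0)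
  define j where "j = n - 2"
  have n: "n = j + 2"
    using assms by (simp add: j_def)
  have "a_gf n y 1 (-1) =
      (\<Sum>i=1..j+2. (if i = j + 2 then y ^ i * 2 ^ j else 0) - (if i = j + 1 then y ^ i * 2 ^ j else 0))"
    unfolding a_gf_conv_a_coeff n a_coeff_at_1_m1 by (intro sum.cong) (auto simp: right_diff_distrib)
  also have "\<dots> = y ^ (j + 2) * 2 ^ j - y ^ (j + 1) * 2 ^ j"
    by (simp add: sum_subtractf)
  also have "\<dots> = 2 ^ (n - 2) * y ^ (n - 1) * (y - 1)"
    using n by (simp add: algebra_simps)
  finally show "a_gf n y 1 (-1) = 2 ^ (n - 2) * y ^ (n - 1) * (y - 1)" .
qed

end
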